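(* Assume the setting of the context. The family $(Q_x)_{x\in\Gamma(u)}$ is locally finite in $\tilde L$: every point of $\tilde L$ has a neighbourhood meeting $Q_x$ for only finitely many $x\in\Gamma(u)$.
   Context: Let $\tilde L=\{(z,\alpha,r)\in\mathbb C\times\mathbb R\times\mathbb R_{>0} : |z|<r\}$, $L=\{(z,w)\in\mathbb C^2: |z|<|w|\}$, and $\pi:\tilde L\to L$, $\pi(z,\alpha,r)=(z,re^{i\alpha})$ (a universal covering). Equip $\mathbb C^2$ with the real symmetric bilinear form $\langle (z_1,w_1),(z_2,w_2)\rangle=\mathrm{Re}(z_1\bar z_2-w_1\bar w_2)$. Let $G=\{(z,w):|z|^2-|w|^2=-1\}\subset L$, identified with $\mathrm{SU}(1,1)$ via $\begin{pmatrix} w&z\\ \bar z&\bar w\end{pmatrix}\mapsto (z,\bar w)$; left multiplication by $g\leftrightarrow(z_g,\bar w_g)$ extends to the $\mathbb R$-linear isometry $(z,v)\mapsto (w_g z+z_g v,\ \bar z_g z+\bar w_g v)$ of $\mathbb C^2$ preserving $L$. Let $\tilde G=\{(z,\alpha,r)\in\tilde L: |z|^2=r^2-1\}=\pi^{-1}(G)$, the universal cover $\widetilde{\mathrm{SU}}(1,1)$ with identity $e=(0,0,1)$; the left action of $G$ on $L$ lifts to a left action of $\tilde G$ on $\tilde L$ extending left multiplication on $\tilde G$. Elements of $\tilde G$ act on the unit disk $\mathbb D$ through $\mathrm{PSU}(1,1)$: $(z,\alpha,r)$ with $w=re^{-i\alpha}$ acts by $\zeta\mapsto (w\zeta+z)/(\bar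 z\zeta+\bar w)$. For $g\in\tilde G$ with $\bar g=\pi(g)$, let $\bar I_{\bar g}=\{a\in L:\langle \bar g,a\rangle\le -1\}$, $\bar E_{\bar g}=\{a\in L:\langle\bar g,a\rangle=-1\}$; let $I_g$, $E_g$ be the connected components of $\pi^{-1}(\bar I_{\bar g})$, $\pi^{-1}(\bar E_{\bar g})$ containing $g$; $E_g$ separates $\tilde L$ into two components, the closure of one being $I_g$; let $H_g$ be the closure of the other (so $\partial H_g=E_g$). Let $\Gamma\subset\tilde G$ be a discrete subgroup of finite level $k$ (the index of $\Gamma\cap Z$ in the infinite cyclic centre $Z$ of $\tilde G$), let $\bar\Gamma$ be its image in $\mathrm{PSU}(1,1)$, and let $u\in\mathbb D$ be a point fixed by a nontrivial element of $\bar\Gamma$, with isotropy group $\bar\Gamma_u$ of order $p$. Assume $p>k$ and (after conjugation) $u=0$. Put $\vartheta=\pi k/p$. For $x$ in the orbit $\Gamma(u)$ let $T(x)=\{g\in\Gamma: g(u)=x\}$ and $Q_x=\bigcap_{g\in T(x)}H_g$. *)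

theory Defs
  imports "HOL-Analysis.Analysis"
begin

text \<open>Points of the universal cover are triples (z, alpha, r).\<close>

definition Lt :: "(complex \<times> real \<times> real) set" where
  "Lt = {(z, a, r). 0 < r \<and> cmod z < r}"

definition Lset :: "(complex \<times> complex) set" where
  "Lset = {(z, w). cmod z < cmod w}"

definition proj :: "complex \<times> real \<times> real \<Rightarrow> complex \<times> complex" where
  "proj = (\<lambda>(z, a, r). (z, complex_of_real r * cis a))"

definition form :: "complex \<times> complex \<Rightarrow> complex \<times> complex \<Rightarrow> real" where
  "form = (\<lambda>(z1, w1) (z2, w2). Re (z1 * cnj z2 - w1 * cnj w2))"

definition Gt :: "(complex \<times> real \<times> real) set" where
  "Gt = {(z, a, r) \<in> Lt. (cmod z)\<^sup>2 = r\<^sup>2 - 1}"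

definition unitG :: "complex \<times> real \<times> real" where
  "unitG = (0, 0, 1)"

text \<open>The lifted (continuous, identity at unitG) left action of Gt on Lt; restricted
  to Gt it is the group multiplication of the universal cover of SU(1,1).
  Left multiplication by g downstairs is (z,v) |-> (w_g z + z_g v, cnj z_g z + cnj w_g v)
  with w_g = r_g e^{-i alpha_g}; the angle is lifted continuously via the principal
  argument of a number of positive real part.\<close>
definition tact :: "complex \<times> real \<times> real \<Rightarrow> complex \<times> real \<times> real \<Rightarrow> complex \<times> real \<times> real" where
  "tact = (\<lambda>(zg, ag, rg) (z, b, s).
     (let wg = complex_of_real rg * cis (- ag);
          v = complex_of_real s * cis b;
          z' = wg * z + zg * v;
          v' = cnj zg * z + cnj wg * v
      in (z', ag + b + Arg (v' / (complex_of_real (rg * s) * cis (ag + b))), cmod v')))"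

definition centre :: "(complex \<times> real \<times> real) set" where
  "centre = {c \<in> Gt. \<forall>g\<in>Gt. tact c g = tact g c}"

definition discrete_subgroup :: "(complex \<times> real \<times> real) set \<Rightarrow> bool" where
  "discrete_subgroup \<Gamma> \<longleftrightarrow> \<Gamma> \<subseteq> Gt \<and> unitG \<in> \<Gamma> \<and>
     (\<forall>g\<in>\<Gamma>. \<forall>h\<in>\<Gamma>. tact g h \<in> \<Gamma>) \<and> (\<forall>g\<in>\<Gamma>. \<exists>h\<in>\<Gamma>. tact g h = unitG) \<and>
     (\<forall>g\<in>\<Gamma>. \<exists>\<epsilon>>0. \<forall>h\<in>\<Gamma>. dist h g < \<epsilon> \<longrightarrow> h = g)"

text \<open>Level: the index of Gamma \<inter> Z in the centre Z (number of cosets; 0 if infinite).\<close>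
definition level :: "(complex \<times> real \<times> real) set \<Rightarrow> nat" where
  "level \<Gamma> = card {(\<lambda>h. tact c h) ` (\<Gamma> \<inter> centre) | c. c \<in> centre}"

text \<open>Action on the unit disk through PSU(1,1), restricted to the disk.\<close>
definition moeb :: "complex \<times> real \<times> real \<Rightarrow> complex \<Rightarrow> complex" where
  "moeb = (\<lambda>(z, a, r) \<zeta>. if cmod \<zeta> < 1 then
      (let w = complex_of_real r * cis (- a) in (w * \<zeta> + z) / (cnj z * \<zeta> + cnj w))
    else 0)"

definition Ibar :: "complex \<times> real \<times> real \<Rightarrow> (complex \<times> complex) set" where
  "Ibar g = {a \<in> Lset. form (proj g) a \<le> -1}"

definition Ebar :: "complex \<times> real \<times> real \<Rightarrow> (complex \<times> complex) set" where
  "Ebar g = {a \<in> Lset. form (proj g) a = -1}"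

definition Ig :: "complex \<times> real \<times> real \<Rightarrow> (complex \<times> real \<times> real) set" where
  "Ig g = connected_component_set (Lt \<inter> proj -` Ibar g) g"

definition Eg :: "complex \<times> real \<times> real \<Rightarrow> (complex \<times> real \<times> real) set" where
  "Eg g = connected_component_set (Lt \<inter> proj -` Ebar g) g"

definition Hg :: "complex \<times> real \<times> real \<Rightarrow> (complex \<times> real \<times> real) set" where
  "Hg g = Lt \<inter> closure (\<Union>{C \<in> components (Lt - Eg g). Lt \<inter> closure C \<noteq> Ig g})"

definition Tset :: "(complex \<times> real \<times> real) set \<Rightarrow> complex \<Rightarrow> complex \<Rightarrow> (complex \<times> real \<times> real) set" where
  "Tset \<Gamma> u x = {g \<in> \<Gamma>. moeb g u = x}"

definition Qset :: "(complex \<times> real \<times> real) set \<Rightarrow> complex \<Rightarrow> complex \<Rightarrow> (complex \<times> real \<times> real) set" where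
  "Qset \<Gamma> u x = (\<Inter>g\<in>Tset \<Gamma> u x. Hg g)"

end

theory Submission
  imports Defs
begin

(* Since the isotropy group of 0 has order p > k, Gamma contains a rotation rot theta with
   0 < theta < pi: by the definition of the level, Gamma contains the rotation by j pi for some
   j <= k, and if no rotation angle of Gamma lay in (0, pi) the isotropy group would have at
   most j elements.  Right multiplication by powers of rot theta keeps g(0) and the radius r_g
   of g and shifts its angle by multiples of theta.  For y = (z, beta, s) in Q_x and g in T(x)
   we choose the shift so that g^-1 y lies within theta/2 of the sheet through the identity;
   as y lies in H_g, g^-1 y is not in the open region {r cos alpha > 1} bounded by E_e, which
   gives r_g cos (theta/2) (s - |z|) <= 1.  Near a point of the cover s - |z| is bounded below,
   so only points x = g(0) with r_g bounded and angle in [0, theta] occur; such g form a compact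
   subset of the group, which meets the discrete Gamma in finitely many points. *)

lemma cis_Arg_divide:
  assumes "v \<noteq> 0" "0 < c"
  shows "of_real (cmod v) * cis (\<alpha> + Arg (v / (of_real c * cis \<alpha>))) = v"
proof -
  define w where "w = v / (of_real c * cis \<alpha>)"
  have "w \<noteq> 0" "cmod v = c * cmod w"
    using assms by (simp_all add: w_def norm_divide norm_mult)
  then have "of_real (cmod v) * cis (Arg w) = of_real c * w"
    by (simp add: cis_Arg Complex.sgn_eq)
  then show ?thesis
    using assms by (simp add: cis_mult[symmetric] w_def field_simps)
qed

lemma Arg_inverse_divide_of_real:
  assumes "0 < Re q" "0 < c"
  shows "Arg (inverse q / of_real c) = - Arg q"
proof -
  have "Arg (inverse q / of_real c) = Arg (inverse q)"
    using assms by (intro Arg_divide_of_real) auto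
  also have "\<dots> = - Arg q"
    using assms(1) by (auto simp: Arg_inverse Arg_real)
  finally show ?thesis .
qed

lemma norm_sub_cnj_mult_ge:
  assumes "cmod x \<le> 1" "0 \<le> s"
  shows "s - cmod z \<le> cmod (of_real s * cis b - cnj x * z)"
proof -
  have "cmod (cnj x * z) \<le> cmod z"
    using assms(1) by (simp add: norm_mult mult_left_le_one_le)
  then show ?thesis
    using norm_triangle_ineq2[of "of_real s * cis b" "cnj x * z"] assms(2) by (simp add: norm_mult)
qed

lemma abs_less_pi_half_if_cos_pos:
  assumes "\<bar>a\<bar> \<le> pi / 2" "0 < r * cos a"
  shows "\<bar>a\<bar> < pi / 2"
proof (rule ccontr)
  assume "\<not> \<bar>a\<bar> < pi / 2"
  then have "a = pi / 2 \<or> a = - (pi / 2)"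
    using assms(1) by linarith
  then show False
    using assms(2) by (elim disjE) simp_all
qed

lemma abs_sub_round_mult_le:
  assumes "0 < \<theta>"
  shows "\<bar>c - of_int \<lfloor>c / \<theta> + 1 / 2\<rfloor> * \<theta>\<bar> \<le> \<theta> / 2"
proof -
  have "\<bar>c / \<theta> - of_int \<lfloor>c / \<theta> + 1 / 2\<rfloor>\<bar> \<le> 1 / 2"
    by linarith
  then show ?thesis
    using assms by (simp add: abs_le_iff field_simps)
qed

lemma card_separated_Int_atLeastLessThan_le:
  fixes A :: "real set"
  assumes "0 < d" "\<And>a b. a \<in> A \<Longrightarrow> b \<in> A \<Longrightarrow> \<bar>a - b\<bar> < d \<Longrightarrow> a = b"
  shows "finite (A \<inter> {0..<of_nat j * d})" "card (A \<inter> {0..<of_nat j * d}) \<le> j"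
proof -
  define fl where "fl t = nat \<lfloor>t / d\<rfloor>" for t
  have inj: "inj_on fl (A \<inter> {0..<of_nat j * d})"
  proof (rule inj_onI)
    fix a b assume "a \<in> A \<inter> {0..<of_nat j * d}" "b \<in> A \<inter> {0..<of_nat j * d}" "fl a = fl b"
    then have "\<lfloor>a / d\<rfloor> = \<lfloor>b / d\<rfloor>" "a \<in> A" "b \<in> A"
      using assms(1) by (auto simp: fl_def eq_nat_nat_iff)
    then have "\<bar>a / d - b / d\<bar> < 1"
      by linarith
    then have "\<bar>a - b\<bar> < d"
      using assms(1) by (simp add: diff_divide_distrib[symmetric] abs_divide)
    then show "a = b"
      using assms(2) \<open>a \<in> A\<close> \<open>b \<in> A\<close> by blast
  qed
  have img: "fl ` (A \<inter> {0..<of_nat j * d}) \<subseteq> {0..<j}"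
  proof
    fix n assume "n \<in> fl ` (A \<inter> {0..<of_nat j * d})"
    then obtain t where "0 \<le> t" "t < of_nat j * d" "n = fl t"
      by auto
    then have "0 \<le> t / d" "t / d < of_nat j"
      using assms(1) by (simp_all add: divide_less_eq)
    then show "n \<in> {0..<j}"
      using \<open>n = fl t\<close> by (simp add: fl_def nat_less_iff floor_less_iff)
  qed
  show "finite (A \<inter> {0..<of_nat j * d})"
    using finite_imageD[OF finite_subset[OF img] inj] by simp
  show "card (A \<inter> {0..<of_nat j * d}) \<le> j"
    using card_inj_on_le[OF inj img] by simp
qed

lemma connected_component_set_eq_clopen:
  assumes "connected C" "x \<in> C" "open U" "closed F" "C = S \<inter> U" "C = S \<inter> F"
  shows "connected_component_set S x = C"
proof
  show "C \<subseteq> connected_component_set S x"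
    using assms by (intro connected_component_maximal) auto
next
  let ?K = "connected_component_set S x"
  have "openin (top_of_set ?K) (?K \<inter> U)" "closedin (top_of_set ?K) (?K \<inter> F)"
    using assms(3,4) by (simp_all add: openin_open_Int closedin_closed_Int)
  moreover have "?K \<inter> U = ?K \<inter> F"
    using connected_component_subset assms(5,6) by blast
  ultimately have "?K \<inter> U = {} \<or> ?K \<inter> U = ?K"
    using connected_connected_component[of S x] unfolding connected_clopen by metis
  moreover have "x \<in> ?K \<inter> U"
    using assms(2,5) by auto
  ultimately have "?K \<subseteq> U"
    by blast
  then show "?K \<subseteq> C"
    using connected_component_subset assms(5) by blast
qed

lemma closure_of_top_of_set: "B \<subseteq> U \<Longrightarrow> top_of_set U closure_of B = U \<inter> closure B"
  by (metis closure_of_subtopology_open euclidean_closure_of)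

lemma homeomorphism_closure_image:
  assumes "homeomorphism S T f g" "A \<subseteq> S"
  shows "T \<inter> closure (f ` A) = f ` (S \<inter> closure A)"
proof -
  have "homeomorphic_maps (top_of_set S) (top_of_set T) f g"
    using assms(1) by (auto simp: homeomorphic_maps_def homeomorphism_def)
  then have "homeomorphic_map (top_of_set S) (top_of_set T) f"
    by (auto simp: homeomorphic_map_maps)
  then have "top_of_set T closure_of (f ` A) = f ` (top_of_set S closure_of A)"
    using assms(2) by (simp add: homeomorphic_map_closure_of)
  moreover have "f ` A \<subseteq> T"
    using assms homeomorphism_image1 by blast
  ultimately show ?thesis
    using assms(2) by (simp add: closure_of_top_of_set)
qed

section \<open>The action of the universal cover\<close>

lemma Lt_iff: "(z, a, r) \<in> Lt \<longleftrightarrow> 0 < r \<and> cmod z < r"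
  by (simp add: Lt_def)

lemma Lt_iff_norm: "(z, a, r) \<in> Lt \<longleftrightarrow> cmod z < r"
  by (auto simp: Lt_iff intro: le_less_trans[OF norm_ge_zero])

lemma Gt_iff: "(z, a, r) \<in> Gt \<longleftrightarrow> 1 \<le> r \<and> (cmod z)\<^sup>2 = r\<^sup>2 - 1"
proof
  assume "(z, a, r) \<in> Gt"
  then have "0 < r" "(cmod z)\<^sup>2 = r\<^sup>2 - 1" by (auto simp: Gt_def Lt_iff)
  moreover from this have "1 \<le> r\<^sup>2" by (metis diff_ge_0_iff_ge zero_le_power2)
  ultimately show "1 \<le> r \<and> (cmod z)\<^sup>2 = r\<^sup>2 - 1"
    by (simp add: power2_nonneg_ge_1_iff)
next
  assume r: "1 \<le> r \<and> (cmod z)\<^sup>2 = r\<^sup>2 - 1"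
  then have "cmod z < r" by (simp add: power2_less_imp_less)
  then show "(z, a, r) \<in> Gt" using r by (simp add: Gt_def Lt_iff)
qed

lemma Gt_subset_Lt: "Gt \<subseteq> Lt"
  by (auto simp: Gt_def)

lemma closed_Gt: "closed Gt"
proof -
  have "Gt = {p. 1 \<le> snd (snd p)} \<inter> {p. (cmod (fst p))\<^sup>2 = (snd (snd p))\<^sup>2 - 1}"
    by (auto simp: Gt_iff)
  also have "closed \<dots>"
    by (intro closed_Int closed_Collect_le closed_Collect_eq continuous_intros)
  finally show ?thesis .
qed

lemma open_Lt: "open Lt"
proof -
  have "Lt = {p. cmod (fst p) < snd (snd p)}"
    by (auto simp: Lt_iff_norm)
  also have "open \<dots>"
    by (intro open_Collect_less continuous_intros)
  finally show ?thesis .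
qed

lemma unitG_Gt: "unitG \<in> Gt"
  by (simp add: unitG_def Gt_iff)

lemma proj_Pair [simp]: "proj (z, a, r) = (z, of_real r * cis a)"
  by (simp add: proj_def)

lemma proj_in_Lset_iff: "0 \<le> r \<Longrightarrow> proj (z, a, r) \<in> Lset \<longleftrightarrow> (z, a, r) \<in> Lt"
  by (simp add: Lset_def Lt_iff_norm norm_mult)

lemma proj_in_Lset: "a \<in> Lt \<Longrightarrow> proj a \<in> Lset"
  by (cases a) (auto simp: Lset_def Lt_iff norm_mult)

lemma form_self: "form p p = (cmod (fst p))\<^sup>2 - (cmod (snd p))\<^sup>2"
  by (cases p) (simp add: form_def cmod_power2, simp add: power2_eq_square)

lemma Lset_iff_form: "p \<in> Lset \<longleftrightarrow> form p p < 0"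
  by (cases p) (auto simp: Lset_def form_self power_strict_mono intro: power2_less_imp_less)

definition lin_act :: "complex \<times> real \<times> real \<Rightarrow> complex \<times> complex \<Rightarrow> complex \<times> complex" where
  "lin_act = (\<lambda>(zg, ag, rg) (z, v).
     (of_real rg * cis (- ag) * z + zg * v, cnj zg * z + of_real rg * cis ag * v))"

definition ginv :: "complex \<times> real \<times> real \<Rightarrow> complex \<times> real \<times> real" where
  "ginv = (\<lambda>(z, a, r). (- z, - a, r))"

lemma ginv_Pair [simp]: "ginv (z, a, r) = (- z, - a, r)"
  by (simp add: ginv_def)

lemma ginv_Gt: "g \<in> Gt \<Longrightarrow> ginv g \<in> Gt"
  by (cases g) (simp add: Gt_iff)

lemma ginv_ginv [simp]: "ginv (ginv g) = g"
  by (cases g) simp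

lemma Gt_norm_cnj: "(zg, ag, rg) \<in> Gt \<Longrightarrow> of_real rg * of_real rg - zg * cnj zg = 1"
  by (simp add: Gt_iff flip: complex_norm_square of_real_mult power2_eq_square)

lemma form_lin_act:
  assumes "g \<in> Gt"
  shows "form (lin_act g p) (lin_act g q) = form p q"
proof -
  obtain zg ag rg where g: "g = (zg, ag, rg)" by (cases g)
  obtain z1 v1 z2 v2 where pq: "p = (z1, v1)" "q = (z2, v2)" by (cases p, cases q)
  have c: "cis ag * cis (- ag) = 1" by (simp add: cis_mult)
  have "(of_real rg * cis (- ag) * z1 + zg * v1) * cnj (of_real rg * cis (- ag) * z2 + zg * v2)
      - (cnj zg * z1 + of_real rg * cis ag * v1) * cnj (cnj zg * z2 + of_real rg * cis ag * v2)
      = (of_real rg * of_real rg * (cis ag * cis (- ag)) - zg * cnj zg) * (z1 * cnj z2 - v1 * cnj v2)"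
    by (simp add: cis_cnj algebra_simps)
  also have "\<dots> = z1 * cnj z2 - v1 * cnj v2"
    using Gt_norm_cnj assms g c by simp
  finally show ?thesis
    by (simp only: form_def lin_act_def g pq prod.case)
qed

lemma lin_act_in_Lset: "g \<in> Gt \<Longrightarrow> p \<in> Lset \<Longrightarrow> lin_act g p \<in> Lset"
  by (simp add: Lset_iff_form form_lin_act)

lemma lin_act_ginv:
  assumes "g \<in> Gt"
  shows "lin_act (ginv g) (lin_act g p) = p"
proof -
  obtain zg ag rg where g: "g = (zg, ag, rg)" by (cases g)
  have c: "cis ag * cis (- ag) = 1" by (simp add: cis_mult)
  have n: "of_real rg * of_real rg - zg * cnj zg = 1"
    using Gt_norm_cnj assms g by simp
  obtain z v where p: "p = (z, v)" by (cases p)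
  have "lin_act (ginv g) (lin_act g p)
      = ((of_real rg * of_real rg * (cis ag * cis (- ag)) - zg * cnj zg) * z,
         (of_real rg * of_real rg * (cis ag * cis (- ag)) - zg * cnj zg) * v)"
    by (simp add: lin_act_def g p algebra_simps)
  then show ?thesis
    using c n p by simp
qed

lemma tact_Pair:
  "tact (zg, ag, rg) (z, b, s) =
     (let (z', v') = lin_act (zg, ag, rg) (z, of_real s * cis b)
      in (z', ag + b + Arg (v' / (of_real (rg * s) * cis (ag + b))), cmod v'))"
  by (simp add: tact_def lin_act_def cis_cnj Let_def)

lemma proj_tact:
  assumes "g \<in> Gt" "a \<in> Lt"
  shows "proj (tact g a) = lin_act g (proj a)"
proof -
  obtain zg ag rg where g: "g = (zg, ag, rg)" by (cases g)
  obtain z b s where a: "a = (z, b, s)" by (cases a)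
  obtain z' v' where zv: "lin_act g (proj a) = (z', v')" by (cases "lin_act g (proj a)")
  have "cmod z' < cmod v'"
    using lin_act_in_Lset[OF assms(1) proj_in_Lset[OF assms(2)]] zv by (simp add: Lset_def)
  then have "v' \<noteq> 0" by auto
  moreover have "0 < rg * s"
    using assms g a by (simp add: Gt_iff Lt_iff)
  ultimately have "of_real (cmod v') * cis (ag + b + Arg (v' / (of_real (rg * s) * cis (ag + b)))) = v'"
    by (rule cis_Arg_divide)
  then show ?thesis
    using zv by (simp add: g a tact_Pair del: of_real_mult)
qed

lemma tact_in_Lt:
  assumes "g \<in> Gt" "a \<in> Lt"
  shows "tact g a \<in> Lt"
proof -
  obtain z' a' r' where t: "tact g a = (z', a', r')" by (cases "tact g a")
  have "0 \<le> r'"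
    using t by (cases g, cases a) (auto simp: tact_Pair split: prod.splits)
  moreover have "proj (tact g a) \<in> Lset"
    using assms by (simp add: proj_tact lin_act_in_Lset proj_in_Lset)
  ultimately show ?thesis
    using t proj_in_Lset_iff by simp
qed

lemma Re_lin_act_quotient_pos:
  assumes "(zg, ag, rg) \<in> Lt" "(z, b, s) \<in> Lt"
  shows "0 < Re (snd (lin_act (zg, ag, rg) (z, of_real s * cis b)) / (of_real (rg * s) * cis (ag + b)))"
proof -
  define q where "q = cnj zg * z / (of_real (rg * s) * cis (ag + b))"
  have "rg * s \<noteq> 0" using assms by (simp add: Lt_iff)
  then have eq: "snd (lin_act (zg, ag, rg) (z, of_real s * cis b)) / (of_real (rg * s) * cis (ag + b)) = 1 + q"
    by (simp add: q_def lin_act_def field_simps cis_mult[symmetric])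
  have "cmod q = cmod zg * cmod z / (rg * s)"
    using assms by (simp add: q_def Lt_iff norm_mult norm_divide)
  also have "\<dots> < 1"
    using assms by (simp add: Lt_iff mult_strict_mono)
  finally have "- Re q < 1"
    using abs_Re_le_cmod[of q] by linarith
  then show ?thesis
    unfolding eq by simp
qed

lemma tact_ginv_tact:
  assumes "g \<in> Gt" "a \<in> Lt"
  shows "tact (ginv g) (tact g a) = a"
proof -
  obtain zg ag rg where g: "g = (zg, ag, rg)" by (cases g)
  obtain z b s where a: "a = (z, b, s)" by (cases a)
  obtain z' v' where zv: "lin_act g (proj a) = (z', v')" by (cases "lin_act g (proj a)")
  define q where "q = v' / (of_real (rg * s) * cis (ag + b))"
  define th where "th = ag + b + Arg q"
  have rs: "0 < rg" "0 < s"
    using assms g a by (simp_all add: Gt_iff Lt_iff)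
  have ta: "tact g a = (z', th, cmod v')"
    using zv by (simp add: g a tact_Pair th_def q_def)
  then have v': "of_real (cmod v') * cis th = v'"
    using proj_tact[OF assms] zv by simp
  have recover: "lin_act (ginv g) (z', v') = (z, of_real s * cis b)"
    using lin_act_ginv[OF assms(1), of "proj a"] zv a by simp
  have "0 < Re q"
    using Re_lin_act_quotient_pos[of zg ag rg z b s] assms g a zv Gt_subset_Lt by (auto simp: q_def)
  then have "Arg (inverse q / of_real (rg\<^sup>2)) = - Arg q"
    using rs by (intro Arg_inverse_divide_of_real) auto
  moreover have "of_real s * cis b / (of_real (rg * cmod v') * cis (- ag + th)) = inverse q / of_real (rg\<^sup>2)"
  proof -
    have "of_real (rg * cmod v') * cis (- ag + th) = of_real rg * cis (- ag) * (of_real (cmod v') * cis th)"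
      unfolding cis_mult[symmetric] by (simp add: mult_ac)
    then have "of_real (rg * cmod v') * cis (- ag + th) = of_real rg * cis (- ag) * v'"
      by (simp only: v')
    moreover have "cis (- ag) * cis (ag + b) = cis b"
      by (simp add: cis_mult)
    moreover have "v' \<noteq> 0"
      using v' \<open>0 < Re q\<close> q_def by auto
    ultimately show ?thesis
      using rs by (simp add: q_def field_simps power2_eq_square)
  qed
  ultimately have "- ag + th + Arg (of_real s * cis b / (of_real (rg * cmod v') * cis (- ag + th))) = b"
    by (simp add: th_def)
  then have "tact (ginv g) (z', th, cmod v') = a"
    using recover v' rs by (simp add: g a tact_Pair norm_mult del: of_real_mult)
  then show ?thesis
    using ta by simp
qed

lemma continuous_on_tact: "continuous_on (Lt \<times> Lt) (\<lambda>p. tact (fst p) (snd p))"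
proof -
  have "(cnj zg * z + of_real rg * cnj (cis (- ag)) * (of_real s * cis b)) /
          (of_real rg * of_real s * cis (ag + b)) \<notin> \<real>\<^sub>\<le>\<^sub>0"
    if "(zg, ag, rg) \<in> Lt" "(z, b, s) \<in> Lt" for zg ag rg z b s
    using Re_lin_act_quotient_pos[OF that]
    by (simp add: lin_act_def cis_cnj complex_nonpos_Reals_iff)
  then show ?thesis
    unfolding tact_def Let_def case_prod_beta
    by (intro continuous_intros) (auto simp: Lt_iff)
qed

lemma continuous_on_tact_ginv: "continuous_on (Lt \<times> Lt) (\<lambda>p. tact (ginv (fst p)) (snd p))"
proof -
  have "continuous_on (Lt \<times> Lt) (\<lambda>p. (ginv (fst p), snd p))"
    unfolding ginv_def case_prod_beta by (intro continuous_intros)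
  moreover have "(\<lambda>p. (ginv (fst p), snd p)) ` (Lt \<times> Lt) \<subseteq> Lt \<times> Lt"
    by (auto simp: ginv_def Lt_iff)
  ultimately show ?thesis
    using continuous_on_compose2[OF continuous_on_tact] by fastforce
qed

lemma homeomorphism_tact:
  assumes "g \<in> Gt"
  shows "homeomorphism Lt Lt (tact g) (tact (ginv g))"
proof -
  have cont: "continuous_on Lt (tact h)" if "h \<in> Gt" for h
  proof -
    have "continuous_on Lt ((\<lambda>p. tact (fst p) (snd p)) \<circ> Pair h)"
      using that Gt_subset_Lt
      by (intro continuous_on_compose continuous_intros continuous_on_subset[OF continuous_on_tact]) auto
    then show ?thesis
      by (simp add: o_def)
  qed
  have inv: "tact g (tact (ginv g) a) = a" if "a \<in> Lt" for a
    using tact_ginv_tact[OF ginv_Gt[OF assms] that] by simp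
  show ?thesis
  proof (rule homeomorphismI)
    show "continuous_on Lt (tact g)" "continuous_on Lt (tact (ginv g))"
      using assms ginv_Gt by (simp_all add: cont)
    show "tact g ` Lt \<subseteq> Lt" "tact (ginv g) ` Lt \<subseteq> Lt"
      using assms ginv_Gt tact_in_Lt by blast+
  qed (simp_all add: assms tact_ginv_tact inv)
qed

lemma tact_unitG: "g \<in> Lt \<Longrightarrow> tact g unitG = g"
  by (cases g) (simp add: unitG_def tact_Pair lin_act_def Lt_iff norm_mult)

lemma tact_ginv_eq_unitG_iff:
  assumes "g \<in> Gt" "h \<in> Lt"
  shows "tact (ginv g) h = unitG \<longleftrightarrow> h = g"
proof -
  have "g \<in> Lt" "unitG \<in> Lt"
    using assms(1) unitG_Gt Gt_subset_Lt by blast+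
  then have "tact g unitG = g" "tact (ginv g) g = unitG"
    using tact_unitG tact_ginv_tact[OF assms(1)] by metis+
  moreover have "tact g (tact (ginv g) h) = h"
    using homeomorphism_apply2[OF homeomorphism_tact[OF assms(1)] assms(2)] .
  ultimately show ?thesis
    by metis
qed

lemma proj_eq_lin_act_unitG: "proj g = lin_act g (proj unitG)"
  by (cases g) (simp add: unitG_def lin_act_def)

lemma form_proj_tact:
  assumes "g \<in> Gt" "b \<in> Lt"
  shows "form (proj g) (proj (tact g b)) = form (proj unitG) (proj b)"
  using assms by (simp add: proj_tact proj_eq_lin_act_unitG[of g] form_lin_act)

lemma tact_image_form_level:
  assumes "g \<in> Gt"
  shows "tact g ` {b \<in> Lt. P (form (proj unitG) (proj b))} = {a \<in> Lt. P (form (proj g) (proj a))}"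
proof -
  have hom: "homeomorphism Lt Lt (tact g) (tact (ginv g))"
    by (rule homeomorphism_tact[OF assms])
  show ?thesis
  proof (intro equalityI subsetI)
    fix a assume "a \<in> tact g ` {b \<in> Lt. P (form (proj unitG) (proj b))}"
    then obtain b where "b \<in> Lt" "P (form (proj unitG) (proj b))" "a = tact g b"
      by blast
    then show "a \<in> {a \<in> Lt. P (form (proj g) (proj a))}"
      using assms tact_in_Lt form_proj_tact by simp
  next
    fix a assume a: "a \<in> {a \<in> Lt. P (form (proj g) (proj a))}"
    then have "tact (ginv g) a \<in> Lt" "tact g (tact (ginv g) a) = a"
      using hom by (auto simp: homeomorphism_apply2 dest: homeomorphism_image2[THEN equalityD1])
    then show "a \<in> tact g ` {b \<in> Lt. P (form (proj unitG) (proj b))}"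
      using a form_proj_tact[OF assms] by (metis (mono_tags, lifting) image_eqI mem_Collect_eq)
  qed
qed

section \<open>The sets Ig, Eg and Hg\<close>

(* At the identity, - form (proj unitG) (proj (z, a, r)) = r cos a; sheet T is the branch
   |a| < pi/2 of the level set {r cos a in T}, the one through unitG. *)
definition sheet :: "real set \<Rightarrow> (complex \<times> real \<times> real) set" where
  "sheet T = {(z, a, r). \<bar>a\<bar> < pi / 2 \<and> r * cos a \<in> T \<and> cmod z < r}"

lemma sheet_iff: "(z, a, r) \<in> sheet T \<longleftrightarrow> \<bar>a\<bar> < pi / 2 \<and> r * cos a \<in> T \<and> cmod z < r"
  by (simp add: sheet_def)

lemma sheet_subset_Lt: "sheet T \<subseteq> Lt"
  by (auto simp: sheet_def Lt_iff_norm)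

lemma connected_sheet:
  assumes "convex T" "T \<subseteq> {0<..}"
  shows "connected (sheet T)"
proof -
  define D where "D = ball (0::complex) 1 \<times> ({- pi / 2<..<pi / 2} \<times> T)"
  define h where "h = (\<lambda>(\<zeta>::complex, a::real, t::real). (\<zeta> * of_real (t / cos a), a, t / cos a))"
  have cos_pos: "0 < cos a" if "- (pi / 2) < a" "a < pi / 2" for a
    using that by (intro cos_gt_zero_pi) auto
  have "connected D"
    unfolding D_def using assms(1) by (intro convex_connected convex_Times convex_ball) auto
  moreover have "continuous_on D h"
    unfolding h_def case_prod_beta
    using cos_pos by (intro continuous_intros) (force simp: D_def)+
  ultimately have "connected (h ` D)"
    by (rule connected_continuous_image[rotated])
  moreover have "h ` D = sheet T"
  proof (intro equalityI subsetI)
    fix p assume "p \<in> h ` D"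
    then obtain \<zeta> a t where "- (pi / 2) < a" "a < pi / 2" "t \<in> T" "cmod \<zeta> < 1" "p = h (\<zeta>, a, t)"
      by (auto simp: D_def)
    moreover from this have "0 < cos a" "0 < t"
      using assms(2) cos_pos by auto
    moreover from this have "cmod \<zeta> * t / cos a < t / cos a"
      using \<open>cmod \<zeta> < 1\<close> by (simp add: divide_strict_right_mono)
    ultimately show "p \<in> sheet T"
      by (simp add: h_def sheet_iff norm_mult norm_divide abs_less_iff)
  next
    fix p assume "p \<in> sheet T"
    then obtain z a r where p: "p = (z, a, r)" "\<bar>a\<bar> < pi / 2" "r * cos a \<in> T" "cmod z < r"
      by (cases p) (auto simp: sheet_iff)
    then have "0 < r" "0 < cos a"
      using cos_pos le_less_trans[OF norm_ge_zero] by (auto simp: abs_less_iff)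
    then have "(z / of_real r, a, r * cos a) \<in> D" "h (z / of_real r, a, r * cos a) = p"
      using p by (auto simp: D_def h_def norm_divide abs_less_iff)
    then show "p \<in> h ` D"
      by (metis image_eqI)
  qed
  ultimately show ?thesis
    by simp
qed

lemma open_sheet_greater: "open (sheet {c<..})"
proof -
  have "sheet {c<..} = {p. \<bar>fst (snd p)\<bar> < pi / 2} \<inter> {p. c < snd (snd p) * cos (fst (snd p))}
      \<inter> {p. cmod (fst p) < snd (snd p)}"
    by (auto simp: sheet_def)
  also have "open \<dots>"
    by (intro open_Int open_Collect_less continuous_intros)
  finally show ?thesis .
qed

lemma sheet_atLeast_subset_closure: "sheet {c..} \<subseteq> closure (sheet {c<..})"
proof
  fix p assume p: "p \<in> sheet {c..}"
  obtain z a r where pz: "p = (z, a, r)" by (cases p)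
  have a: "0 < cos a"
    using p pz by (intro cos_gt_zero_pi) (auto simp: sheet_iff)
  show "p \<in> closure (sheet {c<..})"
    unfolding closure_approachable
  proof (intro allI impI)
    fix e :: real assume "0 < e"
    then have "0 < e * cos a / 2"
      using a by simp
    then have "(z, a, r + e / 2) \<in> sheet {c<..}"
      using p pz \<open>0 < e\<close> by (auto simp: sheet_iff distrib_right)
    moreover have "dist (z, a, r + e / 2) p < e"
      using \<open>0 < e\<close> pz by (simp add: dist_Pair_Pair dist_real_def)
    ultimately show "\<exists>y\<in>sheet {c<..}. dist y p < e"
      by blast
  qed
qed

lemma closure_sheet_greater:
  assumes "0 < c"
  shows "Lt \<inter> closure (sheet {c<..}) = sheet {c..}"
proof
  define F where "F = {p :: complex \<times> real \<times> real. \<bar>fst (snd p)\<bar> \<le> pi / 2} \<inter> {p. c \<le> snd (snd p) * cos (fst (snd p))}"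
  have "closed F"
    unfolding F_def by (intro closed_Int closed_Collect_le continuous_intros)
  moreover have "sheet {c<..} \<subseteq> F"
    by (auto simp: sheet_def F_def)
  ultimately have "closure (sheet {c<..}) \<subseteq> F"
    by (rule closure_minimal[rotated])
  moreover have "Lt \<inter> F \<subseteq> sheet {c..}"
  proof
    fix p assume "p \<in> Lt \<inter> F"
    moreover obtain z a r where "p = (z, a, r)" by (cases p)
    ultimately have "\<bar>a\<bar> \<le> pi / 2" "c \<le> r * cos a" "cmod z < r" "p = (z, a, r)"
      by (auto simp: F_def Lt_iff)
    then show "p \<in> sheet {c..}"
      using assms abs_less_pi_half_if_cos_pos[of a r] by (simp add: sheet_iff)
  qed
  ultimately show "Lt \<inter> closure (sheet {c<..}) \<subseteq> sheet {c..}"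
    by blast
  show "sheet {c..} \<subseteq> Lt \<inter> closure (sheet {c<..})"
    using sheet_atLeast_subset_closure sheet_subset_Lt by blast
qed

lemma connected_component_form_level_unitG:
  assumes "convex T" "T \<subseteq> {0<..}" "x \<in> sheet T"
  shows "connected_component_set {b \<in> Lt. - form (proj unitG) (proj b) \<in> T} x = sheet T"
proof (rule connected_component_set_eq_clopen)
  let ?S = "{b \<in> Lt. - form (proj unitG) (proj b) \<in> T}"
  show "connected (sheet T)"
    using assms(1,2) by (rule connected_sheet)
  show "open {p :: complex \<times> real \<times> real. \<bar>fst (snd p)\<bar> < pi / 2}"
    by (intro open_Collect_less continuous_intros)
  show "closed {p :: complex \<times> real \<times> real. \<bar>fst (snd p)\<bar> \<le> pi / 2}"
    by (intro closed_Collect_le continuous_intros)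
  have "p \<in> sheet T \<longleftrightarrow> p \<in> ?S \<and> \<bar>fst (snd p)\<bar> < pi / 2"
    and "p \<in> sheet T \<longleftrightarrow> p \<in> ?S \<and> \<bar>fst (snd p)\<bar> \<le> pi / 2" for p
  proof -
    obtain z a r where p: "p = (z, a, r)" by (cases p)
    have "r * cos a \<in> T \<Longrightarrow> \<bar>a\<bar> \<le> pi / 2 \<Longrightarrow> \<bar>a\<bar> < pi / 2"
      using assms(2) abs_less_pi_half_if_cos_pos by blast
    then show "p \<in> sheet T \<longleftrightarrow> p \<in> ?S \<and> \<bar>fst (snd p)\<bar> < pi / 2"
      and "p \<in> sheet T \<longleftrightarrow> p \<in> ?S \<and> \<bar>fst (snd p)\<bar> \<le> pi / 2"
      by (auto simp: p sheet_iff form_def unitG_def Lt_iff_norm)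
  qed
  then show "sheet T = ?S \<inter> {p. \<bar>fst (snd p)\<bar> < pi / 2}"
    and "sheet T = ?S \<inter> {p. \<bar>fst (snd p)\<bar> \<le> pi / 2}"
    by blast+
qed (fact assms(3))

lemma connected_component_form_level:
  assumes "g \<in> Gt" "convex T" "T \<subseteq> {0<..}" "1 \<in> T"
  shows "connected_component_set {a \<in> Lt. - form (proj g) (proj a) \<in> T} g = tact g ` sheet T"
proof -
  let ?S = "{b \<in> Lt. - form (proj unitG) (proj b) \<in> T}"
  have level: "tact g ` ?S = {a \<in> Lt. - form (proj g) (proj a) \<in> T}"
    using tact_image_form_level[OF assms(1), of "\<lambda>t. - t \<in> T"] by simp
  have hom: "homeomorphism ?S (tact g ` ?S) (tact g) (tact (ginv g))"
    by (rule homeomorphism_of_subsets[OF homeomorphism_tact[OF assms(1)] _ _ refl]) auto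
  have "unitG \<in> sheet T"
    using assms(4) by (simp add: unitG_def sheet_iff)
  then have "unitG \<in> ?S"
    using assms(4) by (simp add: unitG_def form_def Lt_iff)
  then have "connected_component_set (tact g ` ?S) (tact g unitG) = tact g ` connected_component_set ?S unitG"
    by (rule connected_component_set_homeomorphism[OF hom])
  also have "connected_component_set ?S unitG = sheet T"
    using connected_component_form_level_unitG[OF assms(2,3) \<open>unitG \<in> sheet T\<close>] .
  also have "tact g unitG = g"
    using assms(1) Gt_subset_Lt tact_unitG by blast
  finally show ?thesis
    unfolding level .
qed

lemma Lt_vimage_Ibar: "Lt \<inter> proj -` Ibar g = {a \<in> Lt. - form (proj g) (proj a) \<in> {1..}}"
  using proj_in_Lset by (auto simp: Ibar_def)

lemma Lt_vimage_Ebar: "Lt \<inter> proj -` Ebar g = {a \<in> Lt. - form (proj g) (proj a) \<in> {1}}"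
  using proj_in_Lset by (auto simp: Ebar_def)

lemma Ig_eq: "g \<in> Gt \<Longrightarrow> Ig g = tact g ` sheet {1..}"
  unfolding Ig_def Lt_vimage_Ibar by (rule connected_component_form_level) auto

lemma Eg_eq: "g \<in> Gt \<Longrightarrow> Eg g = tact g ` sheet {1}"
  unfolding Eg_def Lt_vimage_Ebar by (rule connected_component_form_level) auto

lemma connected_component_complement_sheet:
  assumes "x \<in> sheet {1<..}"
  shows "connected_component_set (Lt - sheet {1}) x = sheet {1<..}"
proof (rule connected_component_set_eq_clopen[OF _ assms open_sheet_greater closed_closure])
  show "connected (sheet {1<..})"
    by (rule connected_sheet) auto
  have "sheet {1..} - sheet {1} = sheet {1<..}"
    by (auto simp: sheet_def)
  then show "sheet {1<..} = (Lt - sheet {1}) \<inter> closure (sheet {1<..})"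
    using closure_sheet_greater[of 1] by auto
  show "sheet {1<..} = (Lt - sheet {1}) \<inter> sheet {1<..}"
    using sheet_subset_Lt by (auto simp: sheet_def)
qed

(* g applied to sheet {1<..} is an open component of Lt - Eg g whose closure in Lt is Ig g, so it
   misses the closure of the other components, which contains Hg g. *)
lemma Hg_disjoint_tact_sheet:
  assumes g: "g \<in> Gt"
  shows "Hg g \<inter> tact g ` sheet {1<..} = {}"
proof -
  let ?U = "tact g ` sheet {1<..}"
  have hom: "homeomorphism Lt Lt (tact g) (tact (ginv g))"
    by (rule homeomorphism_tact[OF g])
  have "inj_on (tact g) Lt"
    using hom homeomorphism_apply1 by (metis inj_on_inverseI)
  then have diff: "Lt - Eg g = tact g ` (Lt - sheet {1})"
    using hom sheet_subset_Lt by (simp add: Eg_eq[OF g] inj_on_image_set_diff homeomorphism_image1)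
  define x0 :: "complex \<times> real \<times> real" where "x0 = (0, 0, 2)"
  have x0: "x0 \<in> sheet {1<..}" "x0 \<in> Lt - sheet {1}"
    by (simp_all add: x0_def sheet_iff Lt_iff)
  have "homeomorphism (Lt - sheet {1}) (Lt - Eg g) (tact g) (tact (ginv g))"
    unfolding diff by (rule homeomorphism_of_subsets[OF hom _ _ refl]) auto
  then have "connected_component_set (Lt - Eg g) (tact g x0) = ?U"
    using connected_component_set_homeomorphism x0 connected_component_complement_sheet by metis
  then have comp: "?U \<in> components (Lt - Eg g)"
    using x0 diff by (auto simp: components_iff)
  have "openin (top_of_set Lt) ?U"
    using homeomorphism_imp_open_map[OF hom] open_sheet_greater sheet_subset_Lt
    by (simp add: open_subset)
  then have "open ?U"
    using open_Lt openin_open_trans by blast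
  have "Lt \<inter> closure ?U = Ig g"
    using homeomorphism_closure_image[OF hom sheet_subset_Lt] closure_sheet_greater[of 1]
    by (simp add: Ig_eq[OF g])
  then have "C \<inter> ?U = {}" if "C \<in> components (Lt - Eg g)" "Lt \<inter> closure C \<noteq> Ig g" for C
    using that comp components_eq by metis
  then have "\<Union>{C \<in> components (Lt - Eg g). Lt \<inter> closure C \<noteq> Ig g} \<inter> ?U = {}"
    by blast
  then have "?U \<inter> closure (\<Union>{C \<in> components (Lt - Eg g). Lt \<inter> closure C \<noteq> Ig g}) = {}"
    using open_Int_closure_eq_empty[OF \<open>open ?U\<close>] by blast
  then show ?thesis
    by (auto simp: Hg_def)
qed

lemma Hg_tact_ginv_le:
  assumes g: "g \<in> Gt" and y: "y \<in> Hg g"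
    and ya: "tact (ginv g) y = (z, a, r)" and a: "\<bar>a\<bar> < pi / 2"
  shows "r * cos a \<le> 1"
proof (rule ccontr)
  assume "\<not> r * cos a \<le> 1"
  have hom: "homeomorphism Lt Lt (tact g) (tact (ginv g))"
    by (rule homeomorphism_tact[OF g])
  have "y \<in> Lt"
    using y by (simp add: Hg_def)
  then have "(z, a, r) \<in> Lt" "tact g (z, a, r) = y"
    using hom ya homeomorphism_apply2 homeomorphism_image2 by (metis image_eqI)+
  then have "y \<in> tact g ` sheet {1<..}"
    using \<open>\<not> r * cos a \<le> 1\<close> a by (force simp: sheet_iff Lt_iff)
  then show False
    using Hg_disjoint_tact_sheet[OF g] y by blast
qed

section \<open>Rotations in \<Gamma>\<close>

lemma discrete_subgroup_subset_Gt: "discrete_subgroup \<Gamma> \<Longrightarrow> \<Gamma> \<subseteq> Gt"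
  by (simp add: discrete_subgroup_def)

lemma discrete_subgroup_unitG: "discrete_subgroup \<Gamma> \<Longrightarrow> unitG \<in> \<Gamma>"
  by (simp add: discrete_subgroup_def)

lemma discrete_subgroup_tact: "discrete_subgroup \<Gamma> \<Longrightarrow> g \<in> \<Gamma> \<Longrightarrow> h \<in> \<Gamma> \<Longrightarrow> tact g h \<in> \<Gamma>"
  by (simp add: discrete_subgroup_def)

lemma discrete_subgroup_ginv:
  assumes "discrete_subgroup \<Gamma>" "g \<in> \<Gamma>"
  shows "ginv g \<in> \<Gamma>"
proof -
  obtain h where h: "h \<in> \<Gamma>" "tact g h = unitG"
    using assms by (auto simp: discrete_subgroup_def)
  moreover have "ginv g \<in> Gt" "h \<in> Lt"
    using assms h discrete_subgroup_subset_Gt Gt_subset_Lt ginv_Gt by blast+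
  ultimately show ?thesis
    using tact_ginv_eq_unitG_iff[of "ginv g" h] by simp
qed

lemma moeb_0: "0 < rg \<Longrightarrow> moeb (zg, ag, rg) 0 = zg / (of_real rg * cis ag)"
  by (simp add: moeb_def cis_cnj)

lemma norm_moeb_0_less: "g \<in> Gt \<Longrightarrow> cmod (moeb g 0) < 1"
  by (cases g) (simp add: Gt_def Lt_iff moeb_0 norm_divide norm_mult)

definition rot :: "real \<Rightarrow> complex \<times> real \<times> real" where
  "rot t = (0, t, 1)"

lemma rot_Gt: "rot t \<in> Gt"
  by (simp add: rot_def Gt_iff)

lemma unitG_eq_rot: "unitG = rot 0"
  by (simp add: rot_def unitG_def)

lemma ginv_rot: "ginv (rot t) = rot (- t)"
  by (simp add: rot_def)

lemma tact_rot_right: "0 < rg \<Longrightarrow> tact (zg, ag, rg) (rot t) = (zg * cis t, ag + t, rg)"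
  by (simp add: rot_def tact_Pair lin_act_def cis_mult norm_mult)

lemma tact_rot_left: "0 < s \<Longrightarrow> tact (rot t) (z, b, s) = (cis (- t) * z, t + b, s)"
  by (simp add: rot_def tact_Pair lin_act_def cis_mult norm_mult)

lemma tact_rot_rot: "tact (rot t) (rot t') = rot (t + t')"
  using tact_rot_right[of 1 0 t t'] by (simp add: rot_def)

lemma moeb_rot: "moeb (rot t) \<zeta> = (if cmod \<zeta> < 1 then cis (- 2 * t) * \<zeta> else 0)"
proof -
  have "cis (- t) * \<zeta> / cis t = (cis (- t) / cis t) * \<zeta>"
    by simp
  also have "cis (- t) / cis t = cis (- 2 * t)"
    by (simp add: cis_divide)
  finally show ?thesis
    by (simp add: moeb_def rot_def cis_cnj)
qed

lemma moeb_rot_add_pi: "moeb (rot (t + of_int m * pi)) = moeb (rot t)"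
proof -
  have "cis (- 2 * (t + of_int m * pi)) = cis (- 2 * t) * cis (2 * pi * of_int (- m))"
    by (simp add: cis_mult algebra_simps)
  also have "cis (2 * pi * of_int (- m)) = 1"
    by (rule cis_multiple_2pi) simp
  finally show ?thesis
    by (simp add: moeb_rot fun_eq_iff)
qed

lemma moeb_0_tact_rot: "0 < rg \<Longrightarrow> moeb (tact (zg, ag, rg) (rot t)) 0 = moeb (zg, ag, rg) 0"
  by (simp add: tact_rot_right moeb_0 cis_mult[symmetric])

lemma eq_rot_if_moeb_0:
  assumes "g \<in> Gt" "moeb g 0 = 0"
  shows "g = rot (fst (snd g))"
  using assms by (cases g) (auto simp: Gt_iff moeb_0 rot_def power2_eq_1_iff)

lemma centre_eq_rot:
  assumes "c \<in> centre"
  shows "c = rot (fst (snd c))"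
proof -
  obtain z a r where c: "c = (z, a, r)" by (cases c)
  then have "(z, a, r) \<in> Gt" "tact c (rot (pi / 2)) = tact (rot (pi / 2)) c"
    using assms rot_Gt by (auto simp: centre_def)
  moreover from this have "0 < r"
    by (simp add: Gt_iff)
  ultimately have "z * \<i> = - \<i> * z" "(cmod z)\<^sup>2 = r\<^sup>2 - 1"
    by (simp_all add: c tact_rot_left tact_rot_right Gt_iff)
  then show ?thesis
    using \<open>0 < r\<close> by (simp add: c rot_def power2_eq_1_iff)
qed

lemma rot_of_int_pi_centre: "rot (of_int n * pi) \<in> centre"
proof -
  have "cis (of_int n * pi) = cis (- (of_int n * pi) + 2 * pi * of_int n)"
    by (simp add: algebra_simps)
  also have "\<dots> = cis (- (of_int n * pi)) * cis (2 * pi * of_int n)"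
    by (simp only: cis_mult)
  also have "cis (2 * pi * of_int n) = 1"
    by (rule cis_multiple_2pi) simp
  finally have "cis (- (of_int n * pi)) = cis (of_int n * pi)"
    by simp
  then have "tact (rot (of_int n * pi)) g = tact g (rot (of_int n * pi))" if "g \<in> Gt" for g
    using that by (cases g) (simp add: Gt_iff tact_rot_left tact_rot_right mult.commute)
  then show ?thesis
    by (simp add: centre_def rot_Gt)
qed

definition rot_angles :: "(complex \<times> real \<times> real) set \<Rightarrow> real set" where
  "rot_angles \<Gamma> = {t. rot t \<in> \<Gamma>}"

lemma rot_angles_add:
  "discrete_subgroup \<Gamma> \<Longrightarrow> a \<in> rot_angles \<Gamma> \<Longrightarrow> b \<in> rot_angles \<Gamma> \<Longrightarrow> a + b \<in> rot_angles \<Gamma>"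
  unfolding rot_angles_def by (metis discrete_subgroup_tact tact_rot_rot mem_Collect_eq)

lemma rot_angles_uminus: "discrete_subgroup \<Gamma> \<Longrightarrow> a \<in> rot_angles \<Gamma> \<Longrightarrow> - a \<in> rot_angles \<Gamma>"
  unfolding rot_angles_def by (metis discrete_subgroup_ginv ginv_rot mem_Collect_eq)

lemma rot_angles_of_int_mult:
  assumes "discrete_subgroup \<Gamma>" "a \<in> rot_angles \<Gamma>"
  shows "of_int n * a \<in> rot_angles \<Gamma>"
proof (induction n rule: int_induct[where k = 0])
  case base
  then show ?case
    using discrete_subgroup_unitG[OF assms(1)] by (simp add: rot_angles_def unitG_eq_rot)
next
  case (step1 i)
  then show ?case
    using rot_angles_add[OF assms(1) _ assms(2)] by (simp add: distrib_right)
next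
  case (step2 i)
  then show ?case
    using rot_angles_add[OF assms(1) _ rot_angles_uminus[OF assms]] by (simp add: left_diff_distrib)
qed

lemma tact_rot_in_discrete_subgroup:
  "discrete_subgroup \<Gamma> \<Longrightarrow> g \<in> \<Gamma> \<Longrightarrow> t \<in> rot_angles \<Gamma> \<Longrightarrow> tact g (rot t) \<in> \<Gamma>"
  by (simp add: rot_angles_def discrete_subgroup_tact)

(* Pigeonhole: the k + 1 cosets of rot (n pi), n = 0..k, lie among the k cosets of
   Gamma \<inter> centre in the centre. *)
lemma level_coset_collision:
  assumes "level \<Gamma> = k" "0 < k"
  shows "\<exists>a b. a < b \<and> b \<le> k \<and>
    (\<lambda>h. tact (rot (of_nat a * pi)) h) ` (\<Gamma> \<inter> centre) = (\<lambda>h. tact (rot (of_nat b * pi)) h) ` (\<Gamma> \<inter> centre)"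
proof -
  define cosets where "cosets = {(\<lambda>h. tact c h) ` (\<Gamma> \<inter> centre) | c. c \<in> centre}"
  define \<phi> where "\<phi> n = (\<lambda>h. tact (rot (of_nat n * pi)) h) ` (\<Gamma> \<inter> centre)" for n :: nat
  have "card cosets = k"
    using assms by (simp add: cosets_def level_def)
  then have "finite cosets"
    using assms by (intro card_ge_0_finite) simp
  moreover have "rot (of_nat n * pi) \<in> centre" for n
    using rot_of_int_pi_centre[of "int n"] by simp
  then have "\<phi> ` {0..k} \<subseteq> cosets"
    unfolding cosets_def \<phi>_def by blast
  ultimately have "\<not> inj_on \<phi> {0..k}"
    using card_inj_on_le[of \<phi> "{0..k}" cosets] \<open>card cosets = k\<close> by auto
  then obtain a b where "a \<le> k" "b \<le> k" "a \<noteq> b" "\<phi> a = \<phi> b"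
    unfolding inj_on_def by auto
  then have "a < b \<and> b \<le> k \<and> \<phi> a = \<phi> b \<or> b < a \<and> a \<le> k \<and> \<phi> b = \<phi> a"
    by auto
  then show ?thesis
    unfolding \<phi>_def by blast
qed

lemma level_rot_angle_multiple_pi:
  assumes ds: "discrete_subgroup \<Gamma>" and k: "level \<Gamma> = k" "0 < k"
  shows "\<exists>j. 1 \<le> j \<and> j \<le> k \<and> of_nat j * pi \<in> rot_angles \<Gamma>"
proof -
  obtain a b where ab: "a < b" "b \<le> k"
    and coset: "(\<lambda>h. tact (rot (of_nat a * pi)) h) ` (\<Gamma> \<inter> centre) = (\<lambda>h. tact (rot (of_nat b * pi)) h) ` (\<Gamma> \<inter> centre)"
    using level_coset_collision[OF k] by blast
  have "unitG \<in> \<Gamma> \<inter> centre"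
    using discrete_subgroup_unitG[OF ds] rot_of_int_pi_centre[of 0] by (simp add: unitG_eq_rot)
  moreover have "rot (of_nat b * pi) = tact (rot (of_nat b * pi)) unitG"
    by (rule tact_unitG[symmetric]) (simp add: rot_def Lt_iff)
  ultimately have "rot (of_nat b * pi) \<in> (\<lambda>h. tact (rot (of_nat a * pi)) h) ` (\<Gamma> \<inter> centre)"
    unfolding coset by (rule image_eqI[rotated])
  then obtain h where h: "h \<in> \<Gamma>" "h \<in> centre" "rot (of_nat b * pi) = tact (rot (of_nat a * pi)) h"
    by blast
  define t where "t = fst (snd h)"
  have "h = rot t"
    unfolding t_def using h(2) by (rule centre_eq_rot)
  then have "rot (of_nat b * pi) = rot (of_nat a * pi + t)"
    using h(3) by (simp add: tact_rot_rot)
  then have "t = of_nat (b - a) * pi"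
    using ab(1) by (simp add: rot_def of_nat_diff algebra_simps)
  then show ?thesis
    using h(1) \<open>h = rot t\<close> ab by (intro exI[of _ "b - a"]) (auto simp: rot_angles_def)
qed

lemma stabilizer_subset_moeb_rot_image:
  assumes ds: "discrete_subgroup \<Gamma>" and j: "of_nat j * pi \<in> rot_angles \<Gamma>" "0 < j"
  shows "{moeb g | g. g \<in> \<Gamma> \<and> moeb g 0 = 0} \<subseteq> (\<lambda>t. moeb (rot t)) ` (rot_angles \<Gamma> \<inter> {0..<of_nat j * pi})"
proof
  fix f assume "f \<in> {moeb g | g. g \<in> \<Gamma> \<and> moeb g 0 = 0}"
  then obtain g where g: "g \<in> \<Gamma>" "moeb g 0 = 0" "f = moeb g"
    by blast
  define a where "a = fst (snd g)"
  have "g = rot a"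
    unfolding a_def using g discrete_subgroup_subset_Gt[OF ds] by (intro eq_rot_if_moeb_0) auto
  then have "a \<in> rot_angles \<Gamma>"
    using g(1) by (simp add: rot_angles_def)
  define m where "m = \<lfloor>a / (of_nat j * pi)\<rfloor>"
  define t where "t = a + of_int (- m) * (of_nat j * pi)"
  have "t \<in> rot_angles \<Gamma>"
    unfolding t_def using rot_angles_add[OF ds \<open>a \<in> rot_angles \<Gamma>\<close> rot_angles_of_int_mult[OF ds j(1)]] .
  moreover have "of_int m * (of_nat j * pi) \<le> a" "a < (of_int m + 1) * (of_nat j * pi)"
    using j(2) by (simp_all add: m_def floor_divide_lower floor_divide_upper)
  then have "t \<in> {0..<of_nat j * pi}"
    by (simp add: t_def algebra_simps)
  moreover have "moeb (rot a) = moeb (rot t)"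
    using moeb_rot_add_pi[of t "m * int j"] by (simp add: t_def algebra_simps)
  ultimately show "f \<in> (\<lambda>t. moeb (rot t)) ` (rot_angles \<Gamma> \<inter> {0..<of_nat j * pi})"
    using g(3) \<open>g = rot a\<close> by blast
qed

(* Otherwise the rotation angles in Gamma are pi-separated, so at most j of them lie in
   [0, j pi), and these already account for the whole isotropy group of 0. *)
lemma exists_rot_angle_less_pi:
  assumes ds: "discrete_subgroup \<Gamma>" and k: "level \<Gamma> = k" "0 < k"
    and p: "k < card {moeb g | g. g \<in> \<Gamma> \<and> moeb g 0 = 0}"
  shows "\<exists>\<theta>\<in>rot_angles \<Gamma>. 0 < \<theta> \<and> \<theta> < pi"
proof (rule ccontr)
  assume none: "\<not> (\<exists>\<theta>\<in>rot_angles \<Gamma>. 0 < \<theta> \<and> \<theta> < pi)"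
  obtain j where j: "1 \<le> j" "j \<le> k" "of_nat j * pi \<in> rot_angles \<Gamma>"
    using level_rot_angle_multiple_pi[OF ds k] by blast
  have "a = b" if "a \<in> rot_angles \<Gamma>" "b \<in> rot_angles \<Gamma>" "\<bar>a - b\<bar> < pi" for a b
    using that none rot_angles_add[OF ds _ rot_angles_uminus[OF ds]]
    by (cases a b rule: linorder_cases) (force simp: abs_if)+
  then have F: "finite (rot_angles \<Gamma> \<inter> {0..<of_nat j * pi})" "card (rot_angles \<Gamma> \<inter> {0..<of_nat j * pi}) \<le> j"
    using card_separated_Int_atLeastLessThan_le[of pi] by auto
  have "card {moeb g | g. g \<in> \<Gamma> \<and> moeb g 0 = 0} \<le> card ((\<lambda>t. moeb (rot t)) ` (rot_angles \<Gamma> \<inter> {0..<of_nat j * pi}))"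
    using stabilizer_subset_moeb_rot_image[OF ds j(3)] j(1) F(1) by (intro card_mono) auto
  also have "\<dots> \<le> j"
    using card_image_le[OF F(1), of "\<lambda>t. moeb (rot t)"] F(2) by linarith
  finally show False
    using p j(2) by linarith
qed

section \<open>Local finiteness\<close>

(* Two distinct elements g1, g2 of Gamma near an accumulation point would make ginv g1 * g2
   a nontrivial element of Gamma arbitrarily close to the identity. *)
lemma discrete_subgroup_finite_Int_compact:
  assumes ds: "discrete_subgroup \<Gamma>" and K: "compact K" "K \<subseteq> Gt"
  shows "finite (\<Gamma> \<inter> K)"
proof (rule ccontr)
  assume "infinite (\<Gamma> \<inter> K)"
  then obtain gs where "gs \<in> K" and lim: "gs islimpt (\<Gamma> \<inter> K)"
    using K(1) unfolding compact_eq_Bolzano_Weierstrass by blast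
  then have gs: "gs \<in> Gt"
    using K(2) by blast
  obtain \<epsilon> where "0 < \<epsilon>" and \<epsilon>: "\<And>h. h \<in> \<Gamma> \<Longrightarrow> dist h unitG < \<epsilon> \<Longrightarrow> h = unitG"
    using ds discrete_subgroup_unitG[OF ds] unfolding discrete_subgroup_def by blast
  have "tact (ginv gs) gs = unitG"
    using gs Gt_subset_Lt tact_ginv_eq_unitG_iff by blast
  moreover have "continuous (at (gs, gs)) (\<lambda>p. tact (ginv (fst p)) (snd p))"
    using continuous_on_tact_ginv gs Gt_subset_Lt open_Lt
    by (auto simp: continuous_on_eq_continuous_at open_Times)
  ultimately obtain \<delta> where "0 < \<delta>"
    and \<delta>: "\<And>q. dist q (gs, gs) < \<delta> \<Longrightarrow> dist (tact (ginv (fst q)) (snd q)) unitG < \<epsilon>"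
    using \<open>0 < \<epsilon>\<close> unfolding continuous_at_eps_delta by (metis fst_conv snd_conv)
  obtain g1 where g1: "g1 \<in> \<Gamma> \<inter> K" "g1 \<noteq> gs" "dist g1 gs < \<delta> / 2"
    using lim \<open>0 < \<delta>\<close> unfolding islimpt_approachable by (meson half_gt_zero)
  then obtain g2 where g2: "g2 \<in> \<Gamma> \<inter> K" "g2 \<noteq> gs" "dist g2 gs < min (\<delta> / 2) (dist g1 gs)"
    using lim \<open>0 < \<delta>\<close> unfolding islimpt_approachable by (metis half_gt_zero min_less_iff_conj zero_less_dist_iff)
  have "dist (g1, g2) (gs, gs) \<le> dist g1 gs + dist g2 gs"
    using norm_Pair_le[of "g1 - gs" "g2 - gs"] by (simp add: dist_norm)
  also have "\<dots> < \<delta>"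
    using g1(3) g2(3) by simp
  finally have "dist (tact (ginv g1) g2) unitG < \<epsilon>"
    using \<delta>[of "(g1, g2)"] by simp
  moreover have g12: "g1 \<in> Gt" "g2 \<in> Lt"
    using g1 g2 discrete_subgroup_subset_Gt[OF ds] Gt_subset_Lt by blast+
  moreover have "tact (ginv g1) g2 \<in> \<Gamma>"
    using g1 g2 ds by (simp add: discrete_subgroup_tact discrete_subgroup_ginv)
  ultimately have "tact (ginv g1) g2 = unitG"
    using \<epsilon> by blast
  then have "g2 = g1"
    using tact_ginv_eq_unitG_iff[OF g12] by blast
  then show False
    using g2(3) by simp
qed

lemma finite_orbit_points_bounded:
  assumes "discrete_subgroup \<Gamma>"
  shows "finite {moeb g 0 | g. g \<in> \<Gamma> \<and> snd (snd g) \<le> R \<and> fst (snd g) \<in> {0..\<theta>}}"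
proof -
  define K where "K = Gt \<inter> (cball 0 R \<times> {0..\<theta>} \<times> {0..R})"
  have "compact K"
    unfolding K_def by (intro closed_Int_compact closed_Gt compact_Times compact_cball compact_Icc)
  then have "finite ((\<lambda>g. moeb g 0) ` (\<Gamma> \<inter> K))"
    using discrete_subgroup_finite_Int_compact[OF assms] by (simp add: K_def)
  moreover have "{moeb g 0 | g. g \<in> \<Gamma> \<and> snd (snd g) \<le> R \<and> fst (snd g) \<in> {0..\<theta>}} \<subseteq> (\<lambda>g. moeb g 0) ` (\<Gamma> \<inter> K)"
  proof clarify
    fix g assume "g \<in> \<Gamma>" "snd (snd g) \<le> R" "fst (snd g) \<in> {0..\<theta>}"
    moreover from this have "g \<in> Gt"
      using discrete_subgroup_subset_Gt[OF assms] by blast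
    ultimately have "g \<in> \<Gamma> \<inter> K"
      by (cases g) (auto simp: K_def Gt_def Lt_iff)
    then show "moeb g 0 \<in> (\<lambda>g. moeb g 0) ` (\<Gamma> \<inter> K)"
      by blast
  qed
  ultimately show ?thesis
    by (rule finite_subset[rotated])
qed

lemma tact_ginv_angle_radius:
  fixes zg z :: complex and ag rg b s :: real
  assumes "0 < rg" "0 < s"
  defines "x \<equiv> moeb (zg, ag, rg) 0"
  defines "w \<equiv> of_real s * cis b - cnj x * z"
  shows "snd (tact (ginv (zg, ag, rg)) (z, b, s)) = (b - ag + Arg (w / (of_real s * cis b)), rg * cmod w)"
proof -
  have zg: "zg = x * of_real rg * cis ag"
    using assms(1) by (simp add: x_def moeb_0)
  have "snd (lin_act (ginv (zg, ag, rg)) (z, of_real s * cis b)) = of_real rg * cis (- ag) * w"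
    by (simp add: lin_act_def zg w_def cis_cnj algebra_simps)
  moreover have "of_real rg * cis (- ag) * w / (of_real (rg * s) * cis (b - ag)) = w / (of_real s * cis b)"
  proof -
    have "cis (b - ag) = cis (- ag) * cis b"
      by (simp add: cis_mult)
    then show ?thesis
      using assms(1) by (simp add: field_simps)
  qed
  ultimately show ?thesis
    using assms(1,2) by (simp add: tact_Pair norm_mult case_prod_beta del: of_real_mult)
qed

(* Right multiplication by rot t with t in rot_angles Gamma keeps g(0) and the radius of g;
   t is chosen so that the angle of ginv g1 y is within theta/2 of 0, where y in Hg g1 forces
   r cos alpha <= 1. *)
lemma Qset_rotated_rep_bound:
  assumes ds: "discrete_subgroup \<Gamma>" and \<theta>: "\<theta> \<in> rot_angles \<Gamma>" "0 < \<theta>" "\<theta> < pi"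
    and g: "g \<in> \<Gamma>" and y: "(z, b, s) \<in> Qset \<Gamma> 0 (moeb g 0)"
  shows "\<exists>\<alpha>. \<bar>\<alpha>\<bar> \<le> \<theta> / 2 \<and> snd (snd g) * cmod (of_real s * cis b - cnj (moeb g 0) * z) * cos \<alpha> \<le> 1"
proof -
  obtain zg ag rg where gz: "g = (zg, ag, rg)" by (cases g)
  have "0 < rg"
    using g gz ds discrete_subgroup_subset_Gt by (fastforce simp: Gt_iff)
  define x where "x = moeb g 0"
  define w where "w = of_real s * cis b - cnj x * z"
  define c where "c = b - ag + Arg (w / (of_real s * cis b))"
  define t where "t = of_int \<lfloor>c / \<theta> + 1 / 2\<rfloor> * \<theta>"
  have near: "\<bar>c - t\<bar> \<le> \<theta> / 2"
    unfolding t_def using \<theta>(2) by (rule abs_sub_round_mult_le)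
  define g1 where "g1 = tact g (rot t)"
  have g1: "g1 \<in> \<Gamma>" "g1 = (zg * cis t, ag + t, rg)" "moeb g1 0 = x"
    using tact_rot_in_discrete_subgroup[OF ds g rot_angles_of_int_mult[OF ds \<theta>(1)]]
      tact_rot_right[OF \<open>0 < rg\<close>] moeb_0_tact_rot[OF \<open>0 < rg\<close>]
    by (simp_all add: g1_def t_def x_def gz)
  then have "g1 \<in> Gt" "(z, b, s) \<in> Hg g1"
    using y ds discrete_subgroup_subset_Gt by (blast, auto simp: Qset_def Tset_def x_def)
  moreover from this have "0 < s"
    by (auto simp: Hg_def Lt_iff)
  then have "snd (tact (ginv g1) (z, b, s)) = (c - t, rg * cmod w)"
    using tact_ginv_angle_radius[OF \<open>0 < rg\<close> \<open>0 < s\<close>, where zg = "zg * cis t" and ag = "ag + t"] g1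
    by (simp add: c_def w_def)
  moreover have "\<bar>c - t\<bar> < pi / 2"
    using near \<theta>(3) by simp
  ultimately have "rg * cmod w * cos (c - t) \<le> 1"
    using Hg_tact_ginv_le by (metis prod.collapse)
  then show ?thesis
    using near by (auto simp: gz w_def x_def)
qed

lemma Qset_radius_bound:
  assumes ds: "discrete_subgroup \<Gamma>" and \<theta>: "\<theta> \<in> rot_angles \<Gamma>" "0 < \<theta>" "\<theta> < pi"
    and g: "g \<in> \<Gamma>" and y: "(z, b, s) \<in> Qset \<Gamma> 0 (moeb g 0)"
  shows "snd (snd g) * (cos (\<theta> / 2) * (s - cmod z)) \<le> 1"
proof -
  define w where "w = of_real s * cis b - cnj (moeb g 0) * z"
  obtain \<alpha> where "\<bar>\<alpha>\<bar> \<le> \<theta> / 2" and bound: "snd (snd g) * cmod w * cos \<alpha> \<le> 1"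
    using Qset_rotated_rep_bound[OF assms] by (auto simp: w_def)
  then have "cos (\<theta> / 2) \<le> cos \<alpha>"
    using \<theta> cos_monotone_0_pi_le[of "\<bar>\<alpha>\<bar>" "\<theta> / 2"] by simp
  moreover have "g \<in> Gt"
    using g ds discrete_subgroup_subset_Gt by blast
  moreover from this have "0 \<le> snd (snd g)"
    by (cases g) (simp add: Gt_iff)
  moreover have "g \<in> Tset \<Gamma> 0 (moeb g 0)"
    using g by (simp add: Tset_def)
  then have "(z, b, s) \<in> Hg g"
    using y unfolding Qset_def by blast
  then have "(z, b, s) \<in> Lt"
    by (simp add: Hg_def)
  moreover from this have "s - cmod z \<le> cmod w" "0 \<le> s - cmod z"
    using \<open>g \<in> Gt\<close> unfolding w_def by (auto simp: Lt_iff norm_moeb_0_less less_imp_le intro!: norm_sub_cnj_mult_ge)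
  moreover have "0 < cos (\<theta> / 2)"
    using \<theta> by (intro cos_gt_zero_pi) auto
  ultimately have "snd (snd g) * (cos (\<theta> / 2) * (s - cmod z)) \<le> snd (snd g) * (cos \<alpha> * cmod w)"
    by (intro mult_left_mono mult_mono) auto
  with bound show ?thesis
    by (simp add: mult_ac)
qed

lemma exists_orbit_rep_angle_in:
  assumes ds: "discrete_subgroup \<Gamma>" and \<theta>: "\<theta> \<in> rot_angles \<Gamma>" "0 < \<theta>" and g: "g \<in> \<Gamma>"
  shows "\<exists>h\<in>\<Gamma>. moeb h 0 = moeb g 0 \<and> snd (snd h) = snd (snd g) \<and> fst (snd h) \<in> {0..\<theta>}"
proof -
  obtain zg ag rg where gz: "g = (zg, ag, rg)" by (cases g)
  have "0 < rg"
    using g gz ds discrete_subgroup_subset_Gt by (fastforce simp: Gt_iff)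
  define t where "t = of_int (- \<lfloor>ag / \<theta>\<rfloor>) * \<theta>"
  have "of_int \<lfloor>ag / \<theta>\<rfloor> * \<theta> \<le> ag" "ag < (of_int \<lfloor>ag / \<theta>\<rfloor> + 1) * \<theta>"
    using \<theta>(2) by (simp_all add: floor_divide_lower floor_divide_upper)
  then have "ag + t \<in> {0..\<theta>}"
    by (simp add: t_def algebra_simps)
  moreover have "tact g (rot t) \<in> \<Gamma>"
    unfolding t_def by (rule tact_rot_in_discrete_subgroup[OF ds g rot_angles_of_int_mult[OF ds \<theta>(1)]])
  ultimately show ?thesis
    using \<open>0 < rg\<close> moeb_0_tact_rot[OF \<open>0 < rg\<close>, of zg ag t]
    by (intro bexI[of _ "tact g (rot t)"]) (simp_all add: gz tact_rot_right)
qed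

lemma finite_orbit_points_meeting_Qset:
  assumes ds: "discrete_subgroup \<Gamma>" and \<theta>: "\<theta> \<in> rot_angles \<Gamma>" "0 < \<theta>" "\<theta> < pi" and "0 < m"
  shows "finite {x \<in> (\<lambda>g. moeb g 0) ` \<Gamma>. {q. m < snd (snd q) - cmod (fst q)} \<inter> Qset \<Gamma> 0 x \<noteq> {}}"
proof -
  define R where "R = 1 / (cos (\<theta> / 2) * m)"
  have "0 < cos (\<theta> / 2)"
    using \<theta> by (intro cos_gt_zero_pi) auto
  have "{x \<in> (\<lambda>g. moeb g 0) ` \<Gamma>. {q. m < snd (snd q) - cmod (fst q)} \<inter> Qset \<Gamma> 0 x \<noteq> {}}
      \<subseteq> {moeb g 0 | g. g \<in> \<Gamma> \<and> snd (snd g) \<le> R \<and> fst (snd g) \<in> {0..\<theta>}}"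
  proof
    fix x assume "x \<in> {x \<in> (\<lambda>g. moeb g 0) ` \<Gamma>. {q. m < snd (snd q) - cmod (fst q)} \<inter> Qset \<Gamma> 0 x \<noteq> {}}"
    then obtain g z b s where g: "g \<in> \<Gamma>" "x = moeb g 0"
      and y: "(z, b, s) \<in> Qset \<Gamma> 0 (moeb g 0)" "m < s - cmod z"
      by fastforce
    then have "snd (snd g) * (cos (\<theta> / 2) * (s - cmod z)) \<le> 1"
      and "cos (\<theta> / 2) * m \<le> cos (\<theta> / 2) * (s - cmod z)"
      using Qset_radius_bound[OF ds \<theta> g(1)] \<open>0 < cos (\<theta> / 2)\<close> by simp_all
    moreover have "0 \<le> snd (snd g)"
      using g ds discrete_subgroup_subset_Gt by (cases g) (fastforce simp: Gt_iff)
    ultimately have "snd (snd g) * (cos (\<theta> / 2) * m) \<le> 1"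
      using mult_left_mono order_trans by blast
    then have "snd (snd g) \<le> R"
      using \<open>0 < cos (\<theta> / 2)\<close> \<open>0 < m\<close> by (simp add: R_def le_divide_eq)
    moreover obtain h where "h \<in> \<Gamma>" "moeb h 0 = moeb g 0" "snd (snd h) = snd (snd g)" "fst (snd h) \<in> {0..\<theta>}"
      using exists_orbit_rep_angle_in[OF ds \<theta>(1,2) g(1)] by blast
    ultimately have "x = moeb h 0 \<and> h \<in> \<Gamma> \<and> snd (snd h) \<le> R \<and> fst (snd h) \<in> {0..\<theta>}"
      using g(2) by simp
    then show "x \<in> {moeb g 0 | g. g \<in> \<Gamma> \<and> snd (snd g) \<le> R \<and> fst (snd g) \<in> {0..\<theta>}}"
      by blast
  qed
  then show ?thesis
    by (rule finite_subset[OF _ finite_orbit_points_bounded[OF ds]])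
qed

theorem lemma4p2:
  fixes \<Gamma> :: "(complex \<times> real \<times> real) set" and k p :: nat and u :: complex
  assumes "discrete_subgroup \<Gamma>"
    and "level \<Gamma> = k" and "0 < k"
    and "cmod u < 1"
    and "\<exists>g\<in>\<Gamma>. moeb g u = u \<and> moeb g \<noteq> moeb unitG"
    and "card {moeb g | g. g \<in> \<Gamma> \<and> moeb g u = u} = p"
    and "p > k"
    and "u = 0"
  shows "\<forall>y\<in>Lt. \<exists>N. open N \<and> y \<in> N \<and>
           finite {x \<in> (\<lambda>g. moeb g u) ` \<Gamma>. N \<inter> Qset \<Gamma> u x \<noteq> {}}"
proof
  fix y assume "y \<in> Lt"
  obtain \<theta> where \<theta>: "\<theta> \<in> rot_angles \<Gamma>" "0 < \<theta>" "\<theta> < pi"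
    using exists_rot_angle_less_pi[OF assms(1-3)] assms(6-8) by blast
  define m where "m = (snd (snd y) - cmod (fst y)) / 2"
  define N where "N = {q :: complex \<times> real \<times> real. m < snd (snd q) - cmod (fst q)}"
  have "0 < m"
    using \<open>y \<in> Lt\<close> by (cases y) (simp add: m_def Lt_iff)
  moreover have "open N" "y \<in> N"
    using \<open>y \<in> Lt\<close> by (auto simp: N_def m_def Lt_def intro!: open_Collect_less continuous_intros)
  ultimately show "\<exists>N. open N \<and> y \<in> N \<and> finite {x \<in> (\<lambda>g. moeb g u) ` \<Gamma>. N \<inter> Qset \<Gamma> u x \<noteq> {}}"
    using finite_orbit_points_meeting_Qset[OF assms(1) \<theta>] assms(8) unfolding N_def by blast
qed

end
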